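(* In the combinatorial auction setting, the $n$-VCG mechanism is a tight and total simplification of the VCG mechanism with respect to Nash equilibria.
   Context: Combinatorial auction: finite item set $G$, agents $N=\{1,\dots,n\}$; an outcome assigns pairwise disjoint bundles $o_i\subseteq G$. Agent $i$'s type $\theta_i$ gives a valuation $v_i(\cdot,\theta_i):2^G\to\mathbb{R}_{\ge0}$ with $v_i(\emptyset,\theta_i)=0$, monotone under inclusion; utilities are quasilinear. VCG mechanism: each agent submits a bid vector $x_i$ assigning a bid $x_i(B)$ to each bundle $B\subseteq G$ (with $x_i(\emptyset)=0$); an outcome $o$ maximizing $\sum_i x_i(o_i)$ is chosen and agent $i$ pays $\max_{o'}\sum_{j\ne i}x_j(o'_j)-\sum_{j\ne i}x_j(o_j)$. The $n$-VCG mechanism is the simplification in which each agent's message set is restricted to bid vectors with at most $n$ non-zero entries, with the same allocation and payment rule. Complete information: for a type profile $\theta$, a message profile is a Nash equilibrium if no agent can strictly increase its utility by a unilateral deviation within its message set. Tight: for every $\theta$, every Nash equilibrium of $n$-VCG is a Nash equilibrium of VCG. Total: for every $\theta$ and every Nash equilibrium of VCG, there is a Nash equilibrium of $n$-VCG yielding the same outcome and payments. *)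

theory Defs
  imports Complex_Main
begin

text \<open>Agents are 0,...,n-1 (the paper's 1,...,n); items form a finite set G.\<close>

type_synonym 'g outcome = "nat \<Rightarrow> 'g set"
type_synonym 'g bid = "'g set \<Rightarrow> real"
type_synonym 'g profile = "nat \<Rightarrow> 'g bid"

definition outcomes :: "'g set \<Rightarrow> nat \<Rightarrow> 'g outcome set" where
  "outcomes G n = {u. (\<forall>i<n. u i \<subseteq> G) \<and> (\<forall>i. n \<le> i \<longrightarrow> u i = {})
                    \<and> (\<forall>i<n. \<forall>j<n. i \<noteq> j \<longrightarrow> u i \<inter> u j = {})}"

definition valuation :: "'g set \<Rightarrow> ('g set \<Rightarrow> real) \<Rightarrow> bool" where
  "valuation G w \<longleftrightarrow> w {} = 0 \<and> (\<forall>B. B \<subseteq> G \<longrightarrow> 0 \<le> w B)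
     \<and> (\<forall>A B. A \<subseteq> B \<and> B \<subseteq> G \<longrightarrow> w A \<le> w B)"

text \<open>Messages of VCG: a (nonnegative) bid for every bundle of G, zero on the empty bundle
  (and, as a normalisation, zero outside the bundles of G).\<close>
definition bid_vec :: "'g set \<Rightarrow> 'g bid \<Rightarrow> bool" where
  "bid_vec G b \<longleftrightarrow> b {} = 0 \<and> (\<forall>B. B \<subseteq> G \<longrightarrow> 0 \<le> b B) \<and> (\<forall>B. \<not> B \<subseteq> G \<longrightarrow> b B = 0)"

text \<open>Messages of n-VCG: bid vectors with at most n non-zero entries.\<close>
definition nbid_vec :: "'g set \<Rightarrow> nat \<Rightarrow> 'g bid \<Rightarrow> bool" where
  "nbid_vec G n b \<longleftrightarrow> bid_vec G b \<and> card {B. B \<subseteq> G \<and> b B \<noteq> 0} \<le> n"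

definition welfare :: "'g profile \<Rightarrow> nat set \<Rightarrow> 'g outcome \<Rightarrow> real" where
  "welfare x S u = (\<Sum>j\<in>S. x j (u j))"

definition optimal :: "'g set \<Rightarrow> nat \<Rightarrow> 'g profile \<Rightarrow> 'g outcome set" where
  "optimal G n x = {u \<in> outcomes G n.
      welfare x {..<n} u = Max (welfare x {..<n} ` outcomes G n)}"

definition alloc :: "'g set \<Rightarrow> nat \<Rightarrow> ('g outcome \<Rightarrow> nat) \<Rightarrow> 'g profile \<Rightarrow> 'g outcome" where
  "alloc G n rk x = (THE u. u \<in> optimal G n x \<and> (\<forall>u'\<in>optimal G n x. rk u \<le> rk u'))"

definition payment :: "'g set \<Rightarrow> nat \<Rightarrow> ('g outcome \<Rightarrow> nat) \<Rightarrow> 'g profile \<Rightarrow> nat \<Rightarrow> real" where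
  "payment G n rk x i =
     Max (welfare x ({..<n} - {i}) ` outcomes G n) - welfare x ({..<n} - {i}) (alloc G n rk x)"

definition utility :: "'g set \<Rightarrow> nat \<Rightarrow> ('g outcome \<Rightarrow> nat) \<Rightarrow> (nat \<Rightarrow> 'g set \<Rightarrow> real)
    \<Rightarrow> 'g profile \<Rightarrow> nat \<Rightarrow> real" where
  "utility G n rk v x i = v i (alloc G n rk x i) - payment G n rk x i"

text \<open>Nash equilibrium of the mechanism with message set M (same allocation/payment rule).\<close>
definition is_NE :: "('g bid \<Rightarrow> bool) \<Rightarrow> 'g set \<Rightarrow> nat \<Rightarrow> ('g outcome \<Rightarrow> nat)
    \<Rightarrow> (nat \<Rightarrow> 'g set \<Rightarrow> real) \<Rightarrow> 'g profile \<Rightarrow> bool" where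
  "is_NE M G n rk v x \<longleftrightarrow> (\<forall>i<n. M (x i)) \<and>
     (\<forall>i<n. \<forall>b. M b \<longrightarrow> utility G n rk v (x(i := b)) i \<le> utility G n rk v x i)"

definition val_profile :: "'g set \<Rightarrow> nat \<Rightarrow> (nat \<Rightarrow> 'g set \<Rightarrow> real) \<Rightarrow> bool" where
  "val_profile G n v \<longleftrightarrow> (\<forall>i<n. valuation G (v i))"

definition tight :: "'g set \<Rightarrow> nat \<Rightarrow> ('g outcome \<Rightarrow> nat) \<Rightarrow> bool" where
  "tight G n rk \<longleftrightarrow> (\<forall>v. val_profile G n v \<longrightarrow>
     (\<forall>y. is_NE (nbid_vec G n) G n rk v y \<longrightarrow> is_NE (bid_vec G) G n rk v y))"

definition total :: "'g set \<Rightarrow> nat \<Rightarrow> ('g outcome \<Rightarrow> nat) \<Rightarrow> bool" where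
  "total G n rk \<longleftrightarrow> (\<forall>v. val_profile G n v \<longrightarrow>
     (\<forall>x. is_NE (bid_vec G) G n rk v x \<longrightarrow>
        (\<exists>y. is_NE (nbid_vec G n) G n rk v y \<and> alloc G n rk y = alloc G n rk x
             \<and> (\<forall>i<n. payment G n rk y i = payment G n rk x i))))"

end

theory Submission
  imports Defs
begin

text \<open>If agent i deviates in VCG and the outcome w results, its utility is
  v i (w i) + W(w) - max W, where W is the declared welfare of the other agents; this
  depends on the deviation only through w. Every outcome w can be forced by a bid on the single
  bundle w i large enough, which is a message of n-VCG. So in both mechanisms the Nash condition
  says that no outcome gives agent i more than it currently gets, and every n-VCG equilibrium is a
  VCG equilibrium. Conversely, given a VCG equilibrium, each agent may keep only its bids on the
  bundle it is allocated and on its bundles in n - 1 outcomes maximising the welfare of the others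
  in each agent's absence: allocation and payments are unchanged, while the others' welfare, and
  hence the value of every deviation, can only drop.\<close>

lemma finite_outcomes: "finite G \<Longrightarrow> finite (outcomes G n)"
proof -
  assume G: "finite G"
  have "outcomes G n \<subseteq> {f. \<forall>x. (x \<in> {..<n} \<longrightarrow> f x \<in> Pow G) \<and> (x \<notin> {..<n} \<longrightarrow> f x = {})}"
    unfolding outcomes_def by auto
  moreover have "finite {f. \<forall>x. (x \<in> {..<n} \<longrightarrow> f x \<in> Pow G) \<and> (x \<notin> {..<n} \<longrightarrow> f x = {})}"
    by (rule finite_set_of_finite_funs) (use G in auto)
  ultimately show ?thesis by (rule finite_subset)
qed

lemma empty_in_outcomes: "(\<lambda>_. {}) \<in> outcomes G n"
  unfolding outcomes_def by auto

lemma Max_outcomes_ge: "finite G \<Longrightarrow> u \<in> outcomes G n \<Longrightarrow> f u \<le> Max (f ` outcomes G n)"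
  by (simp add: finite_outcomes)

lemma Max_outcomes_attained: "finite G \<Longrightarrow> \<exists>u\<in>outcomes G n. f u = Max (f ` outcomes G n)"
proof -
  assume G: "finite G"
  have "Max (f ` outcomes G n) \<in> f ` outcomes G n"
    by (rule Max_in) (use G finite_outcomes[OF G] empty_in_outcomes[of G n] in auto)
  then show ?thesis by force
qed

lemma Max_outcomes_eq_if_dominated:
  assumes G: "finite G" and le: "\<And>u. u \<in> outcomes G n \<Longrightarrow> f u \<le> g u"
    and w: "w \<in> outcomes G n" and eq: "f w = g w" and g_max: "g w = Max (g ` outcomes G n)"
  shows "Max (f ` outcomes G n) = Max (g ` outcomes G n)"
proof (rule antisym)
  have "\<And>u. u \<in> outcomes G n \<Longrightarrow> f u \<le> Max (g ` outcomes G n)"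
    using le Max_outcomes_ge[OF G] order_trans by blast
  then show "Max (f ` outcomes G n) \<le> Max (g ` outcomes G n)"
    using finite_outcomes[OF G] empty_in_outcomes[of G n] by (subst Max_le_iff) auto
  show "Max (g ` outcomes G n) \<le> Max (f ` outcomes G n)"
    using Max_outcomes_ge[OF G w, of f] eq g_max by simp
qed

lemma alloc_eqI:
  assumes inj: "inj_on rk (outcomes G n)" and u: "u \<in> optimal G n x"
    and least: "\<forall>u'\<in>optimal G n x. rk u \<le> rk u'"
  shows "alloc G n rk x = u"
  unfolding alloc_def
proof (rule the_equality)
  show "u \<in> optimal G n x \<and> (\<forall>u'\<in>optimal G n x. rk u \<le> rk u')" using u least by auto
next
  fix u2 assume u2: "u2 \<in> optimal G n x \<and> (\<forall>u'\<in>optimal G n x. rk u2 \<le> rk u')"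
  then have "rk u2 = rk u" using u least by (meson order_antisym)
  moreover have "u2 \<in> outcomes G n" "u \<in> outcomes G n" using u2 u unfolding optimal_def by auto
  ultimately show "u2 = u" using inj by (meson inj_onD)
qed

lemma alloc_least_optimal:
  assumes G: "finite G" and inj: "inj_on rk (outcomes G n)"
  shows "alloc G n rk x \<in> optimal G n x \<and> (\<forall>u'\<in>optimal G n x. rk (alloc G n rk x) \<le> rk u')"
proof -
  have fin: "finite (optimal G n x)"
    using finite_outcomes[OF G] unfolding optimal_def by auto
  have "optimal G n x \<noteq> {}"
    using Max_outcomes_attained[OF G, of n "welfare x {..<n}"] unfolding optimal_def by auto
  then have "Min (rk ` optimal G n x) \<in> rk ` optimal G n x" using fin by auto
  then obtain u where u: "u \<in> optimal G n x" "rk u = Min (rk ` optimal G n x)" by auto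
  have least: "\<forall>u'\<in>optimal G n x. rk u \<le> rk u'" using u fin by auto
  show ?thesis using alloc_eqI[OF inj u(1) least] u least by simp
qed

lemma alloc_in_outcomes:
  "finite G \<Longrightarrow> inj_on rk (outcomes G n) \<Longrightarrow> alloc G n rk x \<in> outcomes G n"
  using alloc_least_optimal unfolding optimal_def by blast

lemma welfare_alloc:
  "finite G \<Longrightarrow> inj_on rk (outcomes G n) \<Longrightarrow>
    welfare x {..<n} (alloc G n rk x) = Max (welfare x {..<n} ` outcomes G n)"
  using alloc_least_optimal unfolding optimal_def by blast

text \<open>Lowering bids everywhere but on the chosen outcome keeps that outcome chosen: it stays optimal,
  and the new optima are among the old ones, so the tie-breaking still selects it.\<close>

lemma alloc_eq_if_dominated:
  assumes G: "finite G" and inj: "inj_on rk (outcomes G n)"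
    and le: "\<And>u. u \<in> outcomes G n \<Longrightarrow> welfare x' {..<n} u \<le> welfare x {..<n} u"
    and eq: "welfare x' {..<n} (alloc G n rk x) = welfare x {..<n} (alloc G n rk x)"
  shows "alloc G n rk x' = alloc G n rk x"
proof -
  let ?a = "alloc G n rk x"
  let ?Mx = "Max (welfare x {..<n} ` outcomes G n)"
  have a: "?a \<in> outcomes G n" by (rule alloc_in_outcomes[OF G inj])
  have M': "Max (welfare x' {..<n} ` outcomes G n) = ?Mx"
    by (rule Max_outcomes_eq_if_dominated[OF G le a eq welfare_alloc[OF G inj]])
  have a_opt: "?a \<in> optimal G n x'" using a eq M' welfare_alloc[OF G inj, of x]
    unfolding optimal_def by auto
  have "optimal G n x' \<subseteq> optimal G n x"
  proof
    fix u assume "u \<in> optimal G n x'"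
    then have u: "u \<in> outcomes G n" "welfare x' {..<n} u = ?Mx"
      using M' unfolding optimal_def by auto
    have "welfare x {..<n} u \<le> ?Mx" using Max_outcomes_ge[OF G u(1)] .
    moreover have "?Mx \<le> welfare x {..<n} u" using le[OF u(1)] u(2) by simp
    ultimately show "u \<in> optimal G n x" using u unfolding optimal_def by auto
  qed
  then show ?thesis
    by (intro alloc_eqI[OF inj a_opt]) (use alloc_least_optimal[OF G inj, of x] in blast)
qed

lemma welfare_upd_other: "welfare (x(i := b)) ({..<n} - {i}) = welfare x ({..<n} - {i})"
  unfolding welfare_def by (intro ext sum.cong) auto

lemma welfare_remove: "i < n \<Longrightarrow> welfare x {..<n} u = x i (u i) + welfare x ({..<n} - {i}) u"
  unfolding welfare_def by (simp add: sum.remove)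

lemma welfare_nonneg:
  "\<forall>j<n. bid_vec G (x j) \<Longrightarrow> u \<in> outcomes G n \<Longrightarrow> S \<subseteq> {..<n} \<Longrightarrow> 0 \<le> welfare x S u"
  unfolding welfare_def bid_vec_def outcomes_def by (intro sum_nonneg) auto

definition vcg_value :: "'g set \<Rightarrow> nat \<Rightarrow> (nat \<Rightarrow> 'g set \<Rightarrow> real) \<Rightarrow> 'g profile \<Rightarrow> nat
    \<Rightarrow> 'g outcome \<Rightarrow> real" where
  "vcg_value G n v x i w = v i (w i) + welfare x ({..<n} - {i}) w
     - Max (welfare x ({..<n} - {i}) ` outcomes G n)"

lemma utility_eq_vcg_value: "utility G n rk v x i = vcg_value G n v x i (alloc G n rk x)"
  unfolding utility_def payment_def vcg_value_def by simp

lemma utility_upd_eq_vcg_value: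
  "utility G n rk v (x(i := b)) i = vcg_value G n v x i (alloc G n rk (x(i := b)))"
  unfolding utility_eq_vcg_value vcg_value_def welfare_upd_other ..

lemma nbid_vec_single:
  assumes "B \<subseteq> G" "0 \<le> c" "0 < n"
  shows "nbid_vec G n (\<lambda>B'. if B' = B \<and> B \<noteq> {} then c else 0)"
proof -
  have "{B'. B' \<subseteq> G \<and> (if B' = B \<and> B \<noteq> {} then c else 0) \<noteq> 0} \<subseteq> {B}" by auto
  then have "card {B'. B' \<subseteq> G \<and> (if B' = B \<and> B \<noteq> {} then c else 0) \<noteq> 0} \<le> 1"
    using card_mono[of "{B}"] by fastforce
  then show ?thesis using assms unfolding nbid_vec_def bid_vec_def by auto
qed

text \<open>A bid exceeding the others' maximal welfare on the single bundle w i makes every optimal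
  outcome give agent i the bundle w i, and among those the chosen one maximises the others'
  welfare. If w i is empty, bidding nothing already yields a nonnegative utility, which is at
  least the value of w.\<close>

lemma single_bid_secures_vcg_value:
  assumes G: "finite G" and inj: "inj_on rk (outcomes G n)" and i: "i < n"
    and x: "\<forall>j<n. bid_vec G (x j)" and vi: "valuation G (v i)"
    and w: "w \<in> outcomes G n"
  shows "\<exists>b. nbid_vec G n b \<and> vcg_value G n v x i w \<le> utility G n rk v (x(i := b)) i"
proof -
  define W where "W = welfare x ({..<n} - {i})"
  define M where "M = Max (W ` outcomes G n)"
  define b where "b = (\<lambda>B. if B = w i \<and> w i \<noteq> {} then M + 1 else 0)"
  define u where "u = alloc G n rk (x(i := b))"
  have W_le_M: "\<And>u. u \<in> outcomes G n \<Longrightarrow> W u \<le> M"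
    unfolding M_def using Max_outcomes_ge[OF G] by blast
  have W_nonneg: "\<And>u. u \<in> outcomes G n \<Longrightarrow> 0 \<le> W u"
    unfolding W_def using welfare_nonneg[OF x] by auto
  have u: "u \<in> outcomes G n" unfolding u_def by (rule alloc_in_outcomes[OF G inj])
  have welfare_dev: "welfare (x(i := b)) {..<n} u' = b (u' i) + W u'" for u'
    by (simp add: welfare_remove[OF i] welfare_upd_other W_def)
  have "welfare (x(i := b)) {..<n} w \<le> welfare (x(i := b)) {..<n} u"
    unfolding u_def welfare_alloc[OF G inj] by (rule Max_outcomes_ge[OF G w])
  then have u_opt: "b (w i) + W w \<le> b (u i) + W u"
    unfolding welfare_dev .
  have b_nbid: "nbid_vec G n b"
    unfolding b_def
    by (rule nbid_vec_single) (use w i W_nonneg[OF w] W_le_M[OF w] in \<open>auto simp: outcomes_def\<close>)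
  have utility_dev: "utility G n rk v (x(i := b)) i = v i (u i) + W u - M"
    unfolding utility_upd_eq_vcg_value vcg_value_def u_def W_def M_def ..
  have "v i (w i) + W w \<le> v i (u i) + W u"
  proof (cases "w i = {}")
    case True
    have "welfare (x(i := b)) {..<n} = W"
      using True by (intro ext) (subst welfare_dev, simp add: b_def)
    then have "W u = M" using welfare_alloc[OF G inj, of "x(i := b)"] unfolding u_def M_def by simp
    moreover have "0 \<le> v i (u i)" using vi u i unfolding valuation_def outcomes_def by auto
    moreover have "v i (w i) = 0" using vi True unfolding valuation_def by simp
    ultimately show ?thesis using W_le_M[OF w] by simp
  next
    case False
    have ui: "u i = w i"
    proof (rule ccontr)
      assume "u i \<noteq> w i"
      then have "b (u i) + W u \<le> M" using W_le_M[OF u] by (simp add: b_def)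
      then show False using u_opt W_nonneg[OF w] False by (simp add: b_def)
    qed
    then show ?thesis using u_opt by simp
  qed
  then have "vcg_value G n v x i w \<le> utility G n rk v (x(i := b)) i"
    unfolding utility_dev vcg_value_def W_def[symmetric] M_def[symmetric] by simp
  then show ?thesis using b_nbid by blast
qed

lemma nbid_vec_imp_bid_vec: "nbid_vec G n b \<Longrightarrow> bid_vec G b"
  unfolding nbid_vec_def by simp

lemma is_NE_vcg_value_le_utility:
  assumes G: "finite G" and inj: "inj_on rk (outcomes G n)" and v: "val_profile G n v"
    and M_bid: "\<And>b. M b \<Longrightarrow> bid_vec G b" and nbid_M: "\<And>b. nbid_vec G n b \<Longrightarrow> M b"
    and NE: "is_NE M G n rk v x" and i: "i < n" and w: "w \<in> outcomes G n"
  shows "vcg_value G n v x i w \<le> utility G n rk v x i"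
proof -
  have "\<forall>j<n. bid_vec G (x j)" using NE M_bid unfolding is_NE_def by blast
  then obtain b where "nbid_vec G n b" "vcg_value G n v x i w \<le> utility G n rk v (x(i := b)) i"
    using single_bid_secures_vcg_value[OF G inj i _ _ w] v i unfolding val_profile_def by blast
  moreover have "utility G n rk v (x(i := b)) i \<le> utility G n rk v x i"
    using NE i nbid_M[OF \<open>nbid_vec G n b\<close>] unfolding is_NE_def by blast
  ultimately show ?thesis by simp
qed

lemma tight_nVCG:
  assumes G: "finite G" and inj: "inj_on rk (outcomes G n)"
  shows "tight G n rk"
  unfolding tight_def
proof (intro allI impI)
  fix v y assume v: "val_profile G n v" and NE: "is_NE (nbid_vec G n) G n rk v y"
  show "is_NE (bid_vec G) G n rk v y"
    unfolding is_NE_def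
  proof (intro conjI allI impI)
    fix i assume "i < n"
    then show "bid_vec G (y i)" using NE nbid_vec_imp_bid_vec unfolding is_NE_def by blast
  next
    fix i b assume i: "i < n"
    have "vcg_value G n v y i (alloc G n rk (y(i := b))) \<le> utility G n rk v y i"
      using is_NE_vcg_value_le_utility[where M = "nbid_vec G n", OF G inj v] NE i
        nbid_vec_imp_bid_vec alloc_in_outcomes[OF G inj] by blast
    then show "utility G n rk v (y(i := b)) i \<le> utility G n rk v y i"
      unfolding utility_upd_eq_vcg_value .
  qed
qed

definition prune :: "'g profile \<Rightarrow> (nat \<Rightarrow> 'g set set) \<Rightarrow> 'g profile" where
  "prune x K j B = (if B \<in> K j then x j B else 0)"

lemma bid_vec_nonneg: "bid_vec G b \<Longrightarrow> 0 \<le> b B"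
  unfolding bid_vec_def by (cases "B \<subseteq> G") auto

lemma welfare_prune_le:
  assumes "\<forall>j<n. bid_vec G (x j)" and "S \<subseteq> {..<n}"
  shows "welfare (prune x K) S w \<le> welfare x S w"
  unfolding welfare_def prune_def using assms by (intro sum_mono) (auto intro: bid_vec_nonneg)

lemma welfare_prune_eq: "(\<And>j. j \<in> S \<Longrightarrow> w j \<in> K j) \<Longrightarrow> welfare (prune x K) S w = welfare x S w"
  unfolding welfare_def prune_def by (intro sum.cong) auto

lemma nbid_vec_prune:
  assumes "bid_vec G (x j)" and "finite (K j)" and "card (K j) \<le> n"
  shows "nbid_vec G n (prune x K j)"
proof -
  have "card {B. B \<subseteq> G \<and> prune x K j B \<noteq> 0} \<le> card (K j)"
    by (rule card_mono[OF assms(2)]) (auto simp: prune_def)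
  then have "card {B. B \<subseteq> G \<and> prune x K j B \<noteq> 0} \<le> n"
    using assms(3) by simp
  then show ?thesis using assms(1) unfolding nbid_vec_def bid_vec_def prune_def by auto
qed

lemma card_insert_image_remove_le:
  assumes "j < n"
  shows "card (insert a (f ` ({..<n} - {j}))) \<le> n"
proof -
  have "card (insert a (f ` ({..<n} - {j}))) \<le> Suc (card (f ` ({..<n} - {j})))"
    by (simp add: card_insert_if)
  also have "\<dots> \<le> Suc (card ({..<n} - {j}))"
    by (simp add: card_image_le)
  finally show ?thesis using assms by simp
qed

lemma prune_keeps_alloc_and_Max:
  assumes G: "finite G" and inj: "inj_on rk (outcomes G n)" and x: "\<forall>j<n. bid_vec G (x j)"
    and alloc_K: "\<And>j. alloc G n rk x j \<in> K j"
    and opt: "\<And>k. opt k \<in> outcomes G n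
      \<and> welfare x ({..<n} - {k}) (opt k) = Max (welfare x ({..<n} - {k}) ` outcomes G n)"
    and opt_K: "\<And>j. (\<lambda>k. opt k j) ` ({..<n} - {j}) \<subseteq> K j"
  shows "alloc G n rk (prune x K) = alloc G n rk x"
    and "k < n \<Longrightarrow> Max (welfare (prune x K) ({..<n} - {k}) ` outcomes G n)
      = Max (welfare x ({..<n} - {k}) ` outcomes G n)"
proof -
  show "alloc G n rk (prune x K) = alloc G n rk x"
    by (rule alloc_eq_if_dominated[OF G inj welfare_prune_le[OF x order_refl]])
      (auto intro: welfare_prune_eq alloc_K)
  show "Max (welfare (prune x K) ({..<n} - {k}) ` outcomes G n)
      = Max (welfare x ({..<n} - {k}) ` outcomes G n)" if "k < n"
  proof (rule Max_outcomes_eq_if_dominated[OF G _ conjunct1[OF opt]])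
    show "welfare (prune x K) ({..<n} - {k}) u \<le> welfare x ({..<n} - {k}) u" for u
      by (rule welfare_prune_le[OF x Diff_subset])
    show "welfare (prune x K) ({..<n} - {k}) (opt k) = welfare x ({..<n} - {k}) (opt k)"
    proof (rule welfare_prune_eq)
      fix j assume "j \<in> {..<n} - {k}"
      then have "k \<in> {..<n} - {j}" using that by auto
      then show "opt k j \<in> K j" using opt_K[of j] by blast
    qed
    show "welfare x ({..<n} - {k}) (opt k) = Max (welfare x ({..<n} - {k}) ` outcomes G n)"
      by (rule conjunct2[OF opt])
  qed
qed

lemma total_nVCG:
  assumes G: "finite G" and inj: "inj_on rk (outcomes G n)"
  shows "total G n rk"
  unfolding total_def
proof (intro allI impI)
  fix v x assume v: "val_profile G n v" and NE: "is_NE (bid_vec G) G n rk v x"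
  have x: "\<forall>j<n. bid_vec G (x j)" using NE unfolding is_NE_def by blast
  have "\<exists>w\<in>outcomes G n. welfare x ({..<n} - {k}) w = Max (welfare x ({..<n} - {k}) ` outcomes G n)"
    for k by (rule Max_outcomes_attained[OF G])
  then obtain opt where opt: "\<And>k. opt k \<in> outcomes G n
      \<and> welfare x ({..<n} - {k}) (opt k) = Max (welfare x ({..<n} - {k}) ` outcomes G n)"
    by metis
  define K where "K j = insert (alloc G n rk x j) ((\<lambda>k. opt k j) ` ({..<n} - {j}))" for j
  define y where "y = prune x K"
  have alloc_K: "alloc G n rk x j \<in> K j" for j
    unfolding K_def by simp
  have opt_K: "(\<lambda>k. opt k j) ` ({..<n} - {j}) \<subseteq> K j" for j
    unfolding K_def by blast
  have alloc_y: "alloc G n rk y = alloc G n rk x"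
    unfolding y_def by (rule prune_keeps_alloc_and_Max(1)[OF G inj x alloc_K opt opt_K])
  have Max_y: "Max (welfare y ({..<n} - {k}) ` outcomes G n)
      = Max (welfare x ({..<n} - {k}) ` outcomes G n)" if "k < n" for k
    unfolding y_def by (rule prune_keeps_alloc_and_Max(2)[OF G inj x alloc_K opt opt_K that])
  have payment_y: "payment G n rk y i = payment G n rk x i" if "i < n" for i
    unfolding payment_def alloc_y Max_y[OF that] by (simp add: y_def welfare_prune_eq alloc_K)
  have "is_NE (nbid_vec G n) G n rk v y"
    unfolding is_NE_def
  proof (intro conjI allI impI)
    fix j assume "j < n"
    then show "nbid_vec G n (y j)"
      unfolding y_def using x
      by (intro nbid_vec_prune) (auto simp: K_def card_insert_image_remove_le)
  next
    fix i b assume i: "i < n"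
    define u' where "u' = alloc G n rk (y(i := b))"
    have "utility G n rk v (y(i := b)) i = vcg_value G n v y i u'"
      unfolding u'_def by (rule utility_upd_eq_vcg_value)
    also have "\<dots> \<le> vcg_value G n v x i u'"
      unfolding vcg_value_def Max_y[OF i] using welfare_prune_le[OF x, of "{..<n} - {i}"]
      by (simp add: y_def)
    also have "\<dots> \<le> utility G n rk v x i"
      unfolding u'_def
      using is_NE_vcg_value_le_utility[where M = "bid_vec G", OF G inj v] NE i
        nbid_vec_imp_bid_vec alloc_in_outcomes[OF G inj] by blast
    also have "\<dots> = utility G n rk v y i"
      unfolding utility_def alloc_y payment_y[OF i] ..
    finally show "utility G n rk v (y(i := b)) i \<le> utility G n rk v y i" .
  qed
  then show "\<exists>y. is_NE (nbid_vec G n) G n rk v y \<and> alloc G n rk y = alloc G n rk x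
             \<and> (\<forall>i<n. payment G n rk y i = payment G n rk x i)"
    using alloc_y payment_y by blast
qed

theorem theorem8:
  fixes G :: "'g set" and n :: nat and rk :: "'g outcome \<Rightarrow> nat"
  assumes "finite G"
    and "inj_on rk (outcomes G n)"
  shows "tight G n rk \<and> total G n rk"
  using tight_nVCG[OF assms] total_nVCG[OF assms] by simp

end
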